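(* Let $v_1,\dots,v_n\geq 2$ be integers and let $Q$ be the $n\times n$ tridiagonal matrix with diagonal entries $-v_1,\dots,-v_n$ and all super- and sub-diagonal entries equal to $1$. Let $f:\mathbb{R}^n\to\mathbb{R}$, $f(z)=z^TQ^{-1}z$, and let $y=(2-v_1,\dots,2-v_n)$. If $x\in\mathbb{R}^n$ satisfies $|x_i|\leq|y_i|$ for all $i$ with strict inequality for at least one $i$, then $f(x)>f(y)$. *)

theory Defs
  imports "HOL-Analysis.Analysis"
begin

text \<open>Indices range over a finite linearly ordered type 'n (order-isomorphic to {1..n}).
  Two indices are adjacent iff one is the immediate successor of the other.\<close>
definition adjacent :: "'n::linorder \<Rightarrow> 'n \<Rightarrow> bool" where
  "adjacent i j \<longleftrightarrow> (i < j \<and> \<not> (\<exists>k. i < k \<and> k < j)) \<or> (j < i \<and> \<not> (\<exists>k. j < k \<and> k < i))"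

definition tridiag_Q :: "('n::{finite,linorder} \<Rightarrow> int) \<Rightarrow> real^'n::{finite,linorder}^'n::{finite,linorder}" where
  "tridiag_Q v = (\<chi> i j. if i = j then - real_of_int (v i) else if adjacent i j then 1 else 0)"

definition quadf :: "('n::{finite,linorder} \<Rightarrow> int) \<Rightarrow> real^'n::{finite,linorder} \<Rightarrow> real" where
  "quadf v z = z \<bullet> (matrix_inv (tridiag_Q v) *v z)"

definition yvec :: "('n::{finite,linorder} \<Rightarrow> int) \<Rightarrow> real^'n::{finite,linorder}" where
  "yvec v = (\<chi> i. 2 - real_of_int (v i))"

end

theory Submission
  imports Defs
begin

text \<open>\<open>Q\<close> is symmetric, negative definite and has nonnegative off-diagonal entries. For such a
  matrix \<open>f(z) = min\<^sub>w (- 2 z \<bullet> w - w\<^sup>T Q w)\<close> and \<open>w\<^sup>T Q w \<le> |w|\<^sup>T Q |w|\<close> (entrywise absolute value),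
  so testing \<open>f(a)\<close> with \<open>w = |Q\<^sup>-\<^sup>1 x|\<close> gives \<open>f(a) \<le> f(x)\<close> whenever \<open>|x\<^sub>i| \<le> a\<^sub>i\<close> for all \<open>i\<close>.
  Along a coordinate axis \<open>f\<close> is a strictly concave quadratic, since \<open>Q\<^sup>-\<^sup>1\<close> is negative definite
  too; being antitone in that coordinate, it is strictly decreasing. Finally \<open>y = - |y|\<close> and \<open>f\<close> is even.\<close>

definition neg_definite :: "real^'n^'n \<Rightarrow> bool" where
  "neg_definite M \<longleftrightarrow> (\<forall>w. w \<noteq> 0 \<longrightarrow> w \<bullet> (M *v w) < 0)"

definition metzler :: "real^'n^'n \<Rightarrow> bool" where
  "metzler M \<longleftrightarrow> (\<forall>i j. i \<noteq> j \<longrightarrow> 0 \<le> M $ i $ j)"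

lemma matrix_inv_right:
  fixes M :: "'a::semiring_1^'n^'m"
  assumes "invertible M"
  shows "M ** matrix_inv M = mat 1"
  using assms unfolding invertible_def matrix_inv_def by (rule someI2_ex) auto

lemma matrix_vector_mul_matrix_inv:
  fixes M :: "'a::comm_semiring_1^'n^'m"
  assumes "invertible M"
  shows "M *v (matrix_inv M *v z) = z"
  by (simp add: matrix_vector_mul_assoc matrix_inv_right[OF assms])

lemma inner_matrix_vector_mult:
  "x \<bullet> (M *v y) = (\<Sum>i\<in>UNIV. \<Sum>j\<in>UNIV. M $ i $ j * x $ i * y $ j)"
  unfolding inner_vec_def matrix_vector_mult_def by (simp add: sum_distrib_left mult_ac)

lemma symmetric_matrix_inner:
  fixes M :: "real^'n^'n"
  assumes "transpose M = M"
  shows "(M *v a) \<bullet> b = a \<bullet> (M *v b)"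
  by (metis assms dot_lmul_matrix transpose_matrix_vector)

lemma inner_matrix_vector_mult_line:
  fixes N :: "real^'n^'n"
  shows "(p + r *\<^sub>R e) \<bullet> (N *v (p + r *\<^sub>R e))
    = p \<bullet> (N *v p) + r * (p \<bullet> (N *v e) + e \<bullet> (N *v p)) + r\<^sup>2 * (e \<bullet> (N *v e))"
  by (simp only: matrix_vector_right_distrib matrix_vector_mult_scaleR inner_add_left
      inner_add_right inner_scaleR_left inner_scaleR_right power2_eq_square algebra_simps)

lemma symmetric_form_eq_row_sums:
  fixes M :: "real^'n^'n"
  assumes "transpose M = M"
  shows "w \<bullet> (M *v w) = (\<Sum>i\<in>UNIV. (\<Sum>j\<in>UNIV. M $ i $ j) * (w $ i)\<^sup>2)
    - (\<Sum>i\<in>UNIV. \<Sum>j\<in>UNIV. M $ i $ j * (w $ i - w $ j)\<^sup>2) / 2"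
proof -
  have M_sym: "M $ j $ i = M $ i $ j" for i j
    using assms by (metis transpose_def vec_lambda_beta)
  have "(\<Sum>i\<in>UNIV. \<Sum>j\<in>UNIV. M $ i $ j * (w $ j)\<^sup>2) = (\<Sum>i\<in>UNIV. \<Sum>j\<in>UNIV. M $ i $ j * (w $ i)\<^sup>2)"
    by (subst sum.swap) (simp add: M_sym)
  then have "(\<Sum>i\<in>UNIV. \<Sum>j\<in>UNIV. M $ i $ j * (w $ i - w $ j)\<^sup>2)
      = 2 * (\<Sum>i\<in>UNIV. (\<Sum>j\<in>UNIV. M $ i $ j) * (w $ i)\<^sup>2) - 2 * (w \<bullet> (M *v w))"
    unfolding inner_matrix_vector_mult
    by (simp add: power2_diff algebra_simps sum.distrib sum_subtractf sum_distrib_left sum_distrib_right)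
  then show ?thesis by linarith
qed

lemma neg_definite_le_0:
  assumes "neg_definite M"
  shows "w \<bullet> (M *v w) \<le> 0"
  using assms unfolding neg_definite_def by (cases "w = 0") force+

lemma neg_definite_invertible:
  assumes "neg_definite M"
  shows "invertible M"
proof -
  have "M *v w = 0 \<Longrightarrow> w = 0" for w
    using assms unfolding neg_definite_def by force
  then show ?thesis
    unfolding invertible_left_inverse matrix_left_invertible_ker by blast
qed

lemma neg_definite_matrix_inv:
  fixes M :: "real^'n^'n"
  assumes "neg_definite M"
  shows "neg_definite (matrix_inv M)"
  unfolding neg_definite_def
proof (intro allI impI)
  fix z :: "real^'n" assume "z \<noteq> 0"
  define u where "u = matrix_inv M *v z"
  have Mu: "M *v u = z"
    unfolding u_def using matrix_vector_mul_matrix_inv neg_definite_invertible assms by blast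
  with \<open>z \<noteq> 0\<close> have "u \<noteq> 0" by auto
  then have "u \<bullet> (M *v u) < 0" using assms unfolding neg_definite_def by blast
  then show "z \<bullet> (matrix_inv M *v z) < 0"
    unfolding u_def[symmetric] using Mu by (simp add: inner_commute)
qed

text \<open>Equality holds at \<open>w = - M\<^sup>-\<^sup>1 z\<close>.\<close>
lemma inverse_form_le:
  assumes sym: "transpose M = M" and neg: "neg_definite M"
  shows "z \<bullet> (matrix_inv M *v z) \<le> - 2 * (z \<bullet> w) - w \<bullet> (M *v w)"
proof -
  define u where "u = matrix_inv M *v z"
  have Mu: "M *v u = z"
    unfolding u_def using matrix_vector_mul_matrix_inv neg_definite_invertible neg by blast
  have "(u + w) \<bullet> (M *v (u + w)) = u \<bullet> (M *v u) + (M *v u) \<bullet> w + w \<bullet> (M *v u) + w \<bullet> (M *v w)"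
    by (simp add: matrix_vector_right_distrib inner_add_left inner_add_right symmetric_matrix_inner[OF sym])
  also have "\<dots> = z \<bullet> u + 2 * (z \<bullet> w) + w \<bullet> (M *v w)"
    by (simp add: Mu inner_commute)
  finally show ?thesis
    using neg_definite_le_0[OF neg, of "u + w"] unfolding u_def by linarith
qed

lemma metzler_form_le_abs:
  assumes "metzler M"
  shows "w \<bullet> (M *v w) \<le> (\<chi> i. \<bar>w $ i\<bar>) \<bullet> (M *v (\<chi> i. \<bar>w $ i\<bar>))"
  unfolding inner_matrix_vector_mult
proof (intro sum_mono)
  fix i j
  show "M $ i $ j * w $ i * w $ j \<le> M $ i $ j * (\<chi> i. \<bar>w $ i\<bar>) $ i * (\<chi> i. \<bar>w $ i\<bar>) $ j"
  proof (cases "i = j")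
    case False
    then have "0 \<le> M $ i $ j" using assms unfolding metzler_def by blast
    moreover have "w $ i * w $ j \<le> \<bar>w $ i\<bar> * \<bar>w $ j\<bar>" by (metis abs_ge_self abs_mult)
    ultimately show ?thesis by (simp add: mult.assoc mult_left_mono)
  qed (simp add: abs_mult_self_eq)
qed

lemma inverse_form_antimono:
  assumes sym: "transpose M = M" and neg: "neg_definite M" and "metzler M"
    and le: "\<forall>i. \<bar>x $ i\<bar> \<le> a $ i"
  shows "a \<bullet> (matrix_inv M *v a) \<le> x \<bullet> (matrix_inv M *v x)"
proof -
  define u where "u = matrix_inv M *v x"
  define U where "U = (\<chi> i. \<bar>u $ i\<bar>)"
  have Mu: "M *v u = x"
    unfolding u_def using matrix_vector_mul_matrix_inv neg_definite_invertible neg by blast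
  have "- (a \<bullet> U) \<le> x \<bullet> u"
    unfolding inner_vec_def inner_real_def sum_negf[symmetric]
  proof (rule sum_mono)
    fix i
    have "\<bar>x $ i\<bar> * \<bar>u $ i\<bar> \<le> a $ i * \<bar>u $ i\<bar>" using le by (simp add: mult_right_mono)
    then show "- (a $ i * U $ i) \<le> x $ i * u $ i"
      unfolding U_def using abs_ge_minus_self[of "x $ i * u $ i"] by (simp add: abs_mult)
  qed
  moreover have "a \<bullet> (matrix_inv M *v a) \<le> - 2 * (a \<bullet> U) - U \<bullet> (M *v U)"
    by (rule inverse_form_le[OF sym neg])
  moreover have "u \<bullet> (M *v u) \<le> U \<bullet> (M *v U)"
    unfolding U_def by (rule metzler_form_le_abs) fact
  moreover have "u \<bullet> (M *v u) = x \<bullet> u"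
    by (simp add: Mu inner_commute)
  ultimately show ?thesis unfolding u_def by linarith
qed

lemma quadratic_antimono_imp_strict:
  fixes \<phi> :: "real \<Rightarrow> real"
  assumes \<phi>: "\<And>r. \<phi> r = A + B * r + C * r\<^sup>2" and "C < 0" and "s < t"
    and antimono: "\<And>r1 r2. s \<le> r1 \<Longrightarrow> r1 \<le> r2 \<Longrightarrow> r2 \<le> t \<Longrightarrow> \<phi> r2 \<le> \<phi> r1"
  shows "\<phi> t < \<phi> s"
proof -
  define m where "m = (s + t) / 2"
  have "\<phi> m \<le> \<phi> s" using antimono[of s m] \<open>s < t\<close> unfolding m_def by simp
  moreover have "\<phi> s + \<phi> t - 2 * \<phi> m = C * (s - t)\<^sup>2 / 2"
    unfolding \<phi> m_def by (simp add: power2_eq_square field_simps)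
  moreover have "C * (s - t)\<^sup>2 / 2 < 0" using \<open>C < 0\<close> \<open>s < t\<close> by (simp add: mult_neg_pos)
  ultimately show ?thesis by linarith
qed

lemma inverse_form_strict_antimono:
  fixes M :: "real^'n^'n"
  assumes sym: "transpose M = M" and neg: "neg_definite M" and metz: "metzler M"
    and le: "\<forall>i. \<bar>x $ i\<bar> \<le> a $ i" and lt: "\<bar>x $ j\<bar> < a $ j"
  shows "a \<bullet> (matrix_inv M *v a) < x \<bullet> (matrix_inv M *v x)"
proof -
  define N where "N = matrix_inv M"
  define p where "p = (\<chi> i. if i = j then 0 else a $ i)"
  define e where "e = (axis j 1 :: real^'n)"
  define \<phi> where "\<phi> r = (p + r *\<^sub>R e) \<bullet> (N *v (p + r *\<^sub>R e))" for r
  have component: "(p + r *\<^sub>R e) $ i = (if i = j then r else a $ i)" for r i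
    unfolding p_def e_def by (simp add: axis_def)
  have "\<phi> \<bar>x $ j\<bar> \<le> x \<bullet> (N *v x)"
    unfolding \<phi>_def N_def using le
    by (intro inverse_form_antimono[OF sym neg metz] allI) (unfold component, simp)
  moreover have "\<phi> (a $ j) = a \<bullet> (N *v a)"
  proof -
    have "p + (a $ j) *\<^sub>R e = a" unfolding vec_eq_iff component by simp
    then show ?thesis unfolding \<phi>_def by simp
  qed
  moreover have "\<phi> (a $ j) < \<phi> \<bar>x $ j\<bar>"
  proof (rule quadratic_antimono_imp_strict[where \<phi> = \<phi>])
    show "\<phi> r = p \<bullet> (N *v p) + (p \<bullet> (N *v e) + e \<bullet> (N *v p)) * r + e \<bullet> (N *v e) * r\<^sup>2" for r
      unfolding \<phi>_def inner_matrix_vector_mult_line by (simp add: mult_ac)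
    show "e \<bullet> (N *v e) < 0"
      using neg_definite_matrix_inv[OF neg] unfolding N_def e_def neg_definite_def
      by (simp add: axis_eq_0_iff)
    show "\<phi> r2 \<le> \<phi> r1" if "\<bar>x $ j\<bar> \<le> r1" "r1 \<le> r2" for r1 r2
      unfolding \<phi>_def N_def using le that
      by (intro inverse_form_antimono[OF sym neg metz] allI)
        (unfold component, auto intro: order_trans[OF abs_ge_zero])
  qed (fact lt)
  ultimately show ?thesis unfolding N_def by linarith
qed

lemma adjacent_sym: "adjacent i j \<longleftrightarrow> adjacent j i"
  unfolding adjacent_def by auto

lemma card_adjacent_above_le_1: "card {j. adjacent i j \<and> i < j} \<le> 1"
  for i :: "'n::{finite,linorder}"
proof -
  have "j = k" if "adjacent i j" "i < j" "adjacent i k" "i < k" for j k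
    using that unfolding adjacent_def by (meson linorder_neqE order.asym)
  then show ?thesis unfolding One_nat_def card_le_Suc0_iff_eq[OF finite] by blast
qed

lemma card_adjacent_below_le_1: "card {j. adjacent i j \<and> j < i} \<le> 1"
  for i :: "'n::{finite,linorder}"
proof -
  have "j = k" if "adjacent i j" "j < i" "adjacent i k" "k < i" for j k
    using that unfolding adjacent_def by (meson linorder_neqE order.asym)
  then show ?thesis unfolding One_nat_def card_le_Suc0_iff_eq[OF finite] by blast
qed

lemma card_adjacent_le:
  fixes i :: "'n::{finite,linorder}"
  shows "card {j. adjacent i j} \<le> card {j. adjacent i j \<and> i < j} + card {j. adjacent i j \<and> j < i}"
proof -
  have "{j. adjacent i j} = {j. adjacent i j \<and> i < j} \<union> {j. adjacent i j \<and> j < i}"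
    unfolding adjacent_def by auto
  then show ?thesis by (metis card_Un_le)
qed

lemma card_adjacent_le_2: "card {j. adjacent i j} \<le> 2"
  for i :: "'n::{finite,linorder}"
  using card_adjacent_le[of i] card_adjacent_above_le_1[of i] card_adjacent_below_le_1[of i] by linarith

lemma card_adjacent_least_le_1:
  fixes i :: "'n::{finite,linorder}"
  assumes "\<forall>k. i \<le> k"
  shows "card {j. adjacent i j} \<le> 1"
proof -
  have "{j. adjacent i j \<and> j < i} = {}" using assms leD by blast
  then show ?thesis using card_adjacent_le[of i] card_adjacent_above_le_1[of i] by (simp only: card.empty)
qed

lemma exists_adjacent_below:
  fixes i :: "'n::{finite,linorder}"
  assumes "k < i"
  shows "\<exists>p<i. adjacent p i"
proof -
  define p where "p = Max {k. k < i}"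
  have "p \<in> {k. k < i}" unfolding p_def using assms by (intro Max_in) auto
  moreover have "k \<le> p" if "k < i" for k unfolding p_def using that by simp
  ultimately show ?thesis unfolding adjacent_def by (auto intro!: exI[of _ p] dest: leD)
qed

lemma tridiag_Q_entry:
  "tridiag_Q v $ i $ j = (if adjacent i j then 1 else 0) - (if i = j then real_of_int (v i) else 0)"
  unfolding tridiag_Q_def adjacent_def by auto

lemma transpose_tridiag_Q: "transpose (tridiag_Q v) = tridiag_Q v"
  unfolding transpose_def by (simp add: vec_eq_iff tridiag_Q_entry adjacent_sym)

lemma metzler_tridiag_Q: "metzler (tridiag_Q v)"
  unfolding metzler_def by (simp add: tridiag_Q_entry)

lemma row_sum_tridiag_Q:
  "(\<Sum>j\<in>UNIV. tridiag_Q v $ i $ j) = real (card {j. adjacent i j}) - real_of_int (v i)"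
  by (simp add: tridiag_Q_entry sum_subtractf sum.If_cases)

lemma row_sum_tridiag_Q_nonpos:
  fixes v :: "'n::{finite,linorder} \<Rightarrow> int"
  assumes "v i \<ge> 2"
  shows "(\<Sum>j\<in>UNIV. tridiag_Q v $ i $ j) \<le> 0"
  using card_adjacent_le_2[of i] assms unfolding row_sum_tridiag_Q by linarith

lemma row_sum_tridiag_Q_least_neg:
  fixes v :: "'n::{finite,linorder} \<Rightarrow> int"
  assumes "v i \<ge> 2" and "\<forall>k. i \<le> k"
  shows "(\<Sum>j\<in>UNIV. tridiag_Q v $ i $ j) < 0"
  using card_adjacent_least_le_1[OF assms(2)] assms(1) unfolding row_sum_tridiag_Q by linarith

text \<open>Let \<open>i\<^sub>0\<close> be the first index with \<open>w\<^sub>i\<^sub>0 \<noteq> 0\<close>. Either \<open>i\<^sub>0\<close> is the first index overall, and its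
  negative row sum makes the first sum of \<open>symmetric_form_eq_row_sums\<close> negative, or its
  predecessor \<open>p\<close> has \<open>w\<^sub>p = 0\<close>, and the term \<open>(w\<^sub>p - w\<^sub>i\<^sub>0)\<^sup>2\<close> makes the second sum positive.\<close>
lemma neg_definite_tridiag_Q:
  fixes v :: "'n::{finite,linorder} \<Rightarrow> int"
  assumes v2: "\<forall>i. v i \<ge> 2"
  shows "neg_definite (tridiag_Q v)"
  unfolding neg_definite_def
proof (intro allI impI)
  fix w :: "real^'n::{finite,linorder}" assume "w \<noteq> 0"
  define R where "R i = (\<Sum>j\<in>UNIV. tridiag_Q v $ i $ j) * (w $ i)\<^sup>2" for i
  define D where "D i = (\<Sum>j\<in>UNIV. tridiag_Q v $ i $ j * (w $ i - w $ j)\<^sup>2)" for i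
  have R_nonpos: "R i \<le> 0" for i
    using row_sum_tridiag_Q_nonpos[of v i] v2 unfolding R_def by (simp add: mult_nonpos_nonneg)
  have edge_nonneg: "0 \<le> tridiag_Q v $ i $ j * (w $ i - w $ j)\<^sup>2" for i j
    using metzler_tridiag_Q[of v] unfolding metzler_def by (cases "i = j") auto
  then have D_nonneg: "0 \<le> D i" for i unfolding D_def by (simp add: sum_nonneg)
  define i0 where "i0 = Min {i. w $ i \<noteq> 0}"
  have "i0 \<in> {i. w $ i \<noteq> 0}" unfolding i0_def using \<open>w \<noteq> 0\<close> by (intro Min_in) (auto simp: vec_eq_iff)
  then have w_i0: "w $ i0 \<noteq> 0" by simp
  have i0_least: "w $ k = 0" if "k < i0" for k
    using that Min_le[OF finite, of k "{i. w $ i \<noteq> 0}"] unfolding i0_def by (meson leD mem_Collect_eq)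
  have sum_R: "sum R UNIV \<le> R i0" "sum R UNIV \<le> 0"
    using member_le_sum[of i0 UNIV "\<lambda>i. - R i"] R_nonpos by (auto simp: sum_negf intro: sum_nonpos)
  have sum_D: "D p \<le> sum D UNIV" for p
    using D_nonneg by (auto intro: member_le_sum)
  have "0 \<le> sum D UNIV" using D_nonneg by (simp add: sum_nonneg)
  have "sum R UNIV - sum D UNIV / 2 < 0"
  proof (cases "\<forall>k. i0 \<le> k")
    case True
    then have "R i0 < 0"
      using row_sum_tridiag_Q_least_neg[of v i0] v2 w_i0 unfolding R_def by (simp add: mult_neg_pos)
    then show ?thesis using sum_R \<open>0 \<le> sum D UNIV\<close> by linarith
  next
    case False
    then obtain k where "k < i0" by (auto simp: not_le)
    then obtain p where "p < i0" "adjacent p i0" using exists_adjacent_below by blast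
    then have "0 < tridiag_Q v $ p $ i0 * (w $ p - w $ i0)\<^sup>2"
      using i0_least w_i0 by (simp add: tridiag_Q_entry)
    then have "0 < D p" unfolding D_def using edge_nonneg by (intro sum_pos2) auto
    then show ?thesis using sum_R sum_D[of p] by linarith
  qed
  then show "w \<bullet> (tridiag_Q v *v w) < 0"
    unfolding symmetric_form_eq_row_sums[OF transpose_tridiag_Q] R_def D_def .
qed

theorem proposition3p5:
  fixes v :: "'n::{finite,linorder} \<Rightarrow> int" and x :: "real^'n::{finite,linorder}"
  assumes "\<forall>i. v i \<ge> 2"
    and "\<forall>i. \<bar>x $ i\<bar> \<le> \<bar>yvec v $ i\<bar>"
    and "\<exists>i. \<bar>x $ i\<bar> < \<bar>yvec v $ i\<bar>"
  shows "quadf v x > quadf v (yvec v)"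
proof -
  define a where "a = (\<chi> i. \<bar>yvec v $ i\<bar>)"
  have "yvec v = - a" unfolding a_def yvec_def using assms(1) by (auto simp: vec_eq_iff)
  then have "quadf v (yvec v) = quadf v a"
    unfolding quadf_def by (simp only: vec.neg inner_minus_left inner_minus_right minus_minus)
  moreover obtain j where "\<bar>x $ j\<bar> < a $ j" using assms(3) unfolding a_def by auto
  then have "quadf v a < quadf v x"
    unfolding quadf_def using assms(2) unfolding a_def
    by (intro inverse_form_strict_antimono[OF transpose_tridiag_Q neg_definite_tridiag_Q[OF assms(1)]
          metzler_tridiag_Q]) simp_all
  ultimately show ?thesis by simp
qed

end
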